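(* Let $\mathcal P$ be a 2-reflex orthostack made of three bricks with canonical contact rectangles and signature $\sqcup_i\sqcap_j$ for some types $i,j\in\{1,2,3,4\}$. Then $\mathcal P$ is guarded by a single horizontal closed face guard which is neither the topmost nor the bottommost horizontal face of $\mathcal P$ (namely, one of the two horizontal faces bordering the middle brick).
   Context: A 2-reflex orthostack is an orthogonal polyhedron with no reflex edge parallel to the vertical ($z$) axis all of whose horizontal cross-sections are simply connected; it is a stack of bricks $B_t=R_t\times[z_{t-1},z_t]$, $t=1,\dots,k$ (bottom to top), $z_0<\dots<z_k$, each $R_t$ an axis-parallel rectangle, $R_t\ne R_{t+1}$. The contact rectangle between $B_t$ and $B_{t+1}$ is $(R_t\cap R_{t+1})\times\{z_t\}$; it is canonical if one of $R_t,R_{t+1}$ is strictly contained in the other and their set difference is connected. The type of a canonical contact rectangle is the number $i\in\{1,2,3,4\}$ of sides of the smaller rectangle not contained in the boundary of the larger one. The contact is denoted $\sqcup_i$ if $R_t\subsetneq R_{t+1}$ and $\sqcap_i$ if $R_{t+1}\subsetneq R_t$. The signature is the sequence of these symbols for $t=1,\dots,k-1$, read bottom to top. A point $x$ is visible to $y$ if segment $xy$ does not meet the exterior of the polyhedron; a closed face guard is a face including its boundary; it guards the polyhedron if every point is visible from some point of it. A face is horizontal if orthogonal to the $z$-axis. *)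

theory Defs
  imports "HOL-Analysis.Analysis"
begin

type_synonym rect = "real \<times> real \<times> real \<times> real"

definition valid_rect :: "rect \<Rightarrow> bool" where
  "valid_rect r = (case r of (a,b,c,d) \<Rightarrow> a < b \<and> c < d)"

definition rset :: "rect \<Rightarrow> (real \<times> real) set" where
  "rset r = (case r of (a,b,c,d) \<Rightarrow> {a..b} \<times> {c..d})"

definition rsides :: "rect \<Rightarrow> (real \<times> real) set list" where
  "rsides r = (case r of (a,b,c,d) \<Rightarrow>
     [{a..b} \<times> {c}, {a..b} \<times> {d}, {a} \<times> {c..d}, {b} \<times> {c..d}])"

definition canonical_contact :: "rect \<Rightarrow> rect \<Rightarrow> bool" where
  "canonical_contact small large =
     (rset small \<subset> rset large \<and> connected (rset large - rset small))"

definition contact_type :: "rect \<Rightarrow> rect \<Rightarrow> nat" where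
  "contact_type small large =
     length (filter (\<lambda>s. \<not> s \<subseteq> frontier (rset large)) (rsides small))"

definition brick :: "rect \<Rightarrow> real \<Rightarrow> real \<Rightarrow> (real \<times> real \<times> real) set" where
  "brick r z0 z1 = {(x,y,z). (x,y) \<in> rset r \<and> z0 \<le> z \<and> z \<le> z1}"

definition at_height :: "(real \<times> real) set \<Rightarrow> real \<Rightarrow> (real \<times> real \<times> real) set" where
  "at_height S h = {(x,y,z). (x,y) \<in> S \<and> z = h}"

definition visible :: "(real \<times> real \<times> real) set \<Rightarrow> real \<times> real \<times> real \<Rightarrow> real \<times> real \<times> real \<Rightarrow> bool" where
  "visible P x y = (closed_segment x y \<subseteq> P)"

definition guards :: "(real \<times> real \<times> real) set \<Rightarrow> (real \<times> real \<times> real) set \<Rightarrow> bool" where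
  "guards G P = (\<forall>p\<in>P. \<exists>g\<in>G. visible P g p)"

end

theory Submission
  imports Defs
begin

text \<open>Write \<open>R\<^sub>1, R\<^sub>2, R\<^sub>3\<close> for the cross-sections of the bricks, so \<open>R\<^sub>1, R\<^sub>3 \<subset> R\<^sub>2\<close>, and \<open>F = closure (R\<^sub>2 - R\<^sub>1)\<close> for the
  lower face bordering the middle brick. Since \<open>R\<^sub>1\<close> is closed and \<open>R\<^sub>2\<close> convex, a segment from
  \<open>R\<^sub>1\<close> to \<open>R\<^sub>2 - R\<^sub>1\<close> must cross \<open>R\<^sub>1 \<inter> F\<close>, and from such a point the face \<open>F\<close> sees the convex
  prisms \<open>R\<^sub>1 \<times> [z\<^sub>0, z\<^sub>1]\<close> and \<open>R\<^sub>2 \<times> [z\<^sub>1, z\<^sub>2]\<close>. If \<open>R\<^sub>3\<close> also meets \<open>F\<close>, then \<open>F\<close> sees the convex prism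
  \<open>R\<^sub>3 \<times> [z\<^sub>1, z\<^sub>3]\<close> too, and guards the stack. Otherwise \<open>R\<^sub>3 \<subseteq> R\<^sub>1\<close>, and the upper face
  \<open>closure (R\<^sub>2 - R\<^sub>3)\<close> guards by the mirrored argument. Only the strict inclusions of the
  contacts are needed.\<close>

definition prism :: "(real \<times> real) set \<Rightarrow> real \<Rightarrow> real \<Rightarrow> (real \<times> real \<times> real) set" where
  "prism A lo hi = {(x,y,z). (x,y) \<in> A \<and> lo \<le> z \<and> z \<le> hi}"

lemma brick_eq_prism: "brick r lo hi = prism (rset r) lo hi"
  by (simp add: brick_def prism_def)

lemma mem_prism [simp]: "(x,y,z) \<in> prism A lo hi \<longleftrightarrow> (x,y) \<in> A \<and> lo \<le> z \<and> z \<le> hi"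
  by (simp add: prism_def)

lemma mem_at_height [simp]: "(x,y,z) \<in> at_height S h \<longleftrightarrow> (x,y) \<in> S \<and> z = h"
  by (simp add: at_height_def)

lemma convex_prism:
  assumes A: "convex A" shows "convex (prism A lo hi)"
proof (rule convexI)
  fix p q :: "real \<times> real \<times> real" and u v :: real
  assume p: "p \<in> prism A lo hi" and q: "q \<in> prism A lo hi"
    and uv: "0 \<le> u" "0 \<le> v" "u + v = 1"
  obtain x y z x' y' z' where pq: "p = (x,y,z)" "q = (x',y',z')" by (cases p, cases q) auto
  have "u *\<^sub>R (x,y) + v *\<^sub>R (x',y') \<in> A"
    using p q uv pq by (intro convexD[OF A]) auto
  moreover have "u *\<^sub>R z + v *\<^sub>R z' \<in> {lo..hi}"
    using p q uv pq by (intro convexD[OF convex_real_interval(5)]) auto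
  ultimately show "u *\<^sub>R p + v *\<^sub>R q \<in> prism A lo hi"
    using pq by auto
qed

lemma convex_rset: "convex (rset r)"
  by (cases r) (auto simp: rset_def intro!: convex_Times)

lemma closed_rset: "closed (rset r)"
  by (cases r) (auto simp: rset_def intro!: closed_Times)

lemma rset_nonempty: "valid_rect r \<Longrightarrow> rset r \<noteq> {}"
  by (cases r) (auto simp: rset_def valid_rect_def)

lemma closed_psubset_convex_meets_closure_diff:
  fixes A B :: "'a::real_normed_vector set"
  assumes "A \<subset> B" "A \<noteq> {}" "closed A" "convex B"
  obtains g where "g \<in> A" "g \<in> closure (B - A)"
proof -
  obtain p q where p: "p \<in> A" and q: "q \<in> B" "q \<notin> A" using assms(1,2) by auto
  let ?S = "closed_segment p q"
  have "p \<in> B" using p assms(1) by blast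
  then have "?S \<subseteq> B"
    using q(1) assms(4) by (simp add: closed_segment_subset)
  then have "?S \<subseteq> A \<union> closure (B - A)"
    using closure_subset by blast
  moreover have "q \<in> closure (B - A)"
    using q closure_subset by blast
  ultimately have "A \<inter> closure (B - A) \<inter> ?S \<noteq> {}"
    using connected_closedD[OF connected_segment _ _ assms(3) closed_closure] p by blast
  then show thesis using that by blast
qed

lemma visible_in_convex:
  assumes "convex C" "C \<subseteq> P" "a \<in> C" "b \<in> C" shows "visible P a b"
  using assms closed_segment_subset unfolding visible_def by blast

lemma guards_by_convex_cover:
  assumes "P \<subseteq> \<Union>\<C>" "\<And>C. C \<in> \<C> \<Longrightarrow> convex C \<and> C \<subseteq> P \<and> C \<inter> G \<noteq> {}"
  shows "guards G P"
  unfolding guards_def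
proof
  fix p assume "p \<in> P"
  then obtain C where "C \<in> \<C>" "p \<in> C" using assms(1) by blast
  moreover obtain g where "g \<in> C \<inter> G" using assms(2)[OF \<open>C \<in> \<C>\<close>] by blast
  ultimately show "\<exists>g\<in>G. visible P g p" using assms(2) visible_in_convex by blast
qed

lemma stack_guarded_by_lower_face:
  assumes "convex A\<^sub>1" "convex A\<^sub>2" "convex A\<^sub>3" "A\<^sub>1 \<subseteq> A\<^sub>2" "A\<^sub>3 \<subseteq> A\<^sub>2"
    and "z\<^sub>0 \<le> z\<^sub>1" "z\<^sub>1 \<le> z\<^sub>2" "z\<^sub>2 \<le> z\<^sub>3"
    and "g \<in> A\<^sub>1" "g \<in> closure (A\<^sub>2 - A\<^sub>1)"
    and "h \<in> A\<^sub>3" "h \<in> closure (A\<^sub>2 - A\<^sub>1)"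
  shows "guards (at_height (closure (A\<^sub>2 - A\<^sub>1)) z\<^sub>1)
           (prism A\<^sub>1 z\<^sub>0 z\<^sub>1 \<union> prism A\<^sub>2 z\<^sub>1 z\<^sub>2 \<union> prism A\<^sub>3 z\<^sub>2 z\<^sub>3)"
    (is "guards ?G ?P")
proof (rule guards_by_convex_cover)
  show "?P \<subseteq> \<Union>{prism A\<^sub>1 z\<^sub>0 z\<^sub>1, prism A\<^sub>2 z\<^sub>1 z\<^sub>2, prism A\<^sub>3 z\<^sub>1 z\<^sub>3}"
    using assms(7) unfolding prism_def by auto
  have "(fst g, snd g, z\<^sub>1) \<in> ?G" "(fst h, snd h, z\<^sub>1) \<in> ?G"
    using assms(10,12) by auto
  moreover have "(fst g, snd g, z\<^sub>1) \<in> prism A\<^sub>1 z\<^sub>0 z\<^sub>1" "(fst g, snd g, z\<^sub>1) \<in> prism A\<^sub>2 z\<^sub>1 z\<^sub>2"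
    "(fst h, snd h, z\<^sub>1) \<in> prism A\<^sub>3 z\<^sub>1 z\<^sub>3"
    using assms by auto
  moreover have "prism A\<^sub>3 z\<^sub>1 z\<^sub>3 \<subseteq> ?P"
    using assms(5) unfolding prism_def by auto
  ultimately show "convex C \<and> C \<subseteq> ?P \<and> C \<inter> ?G \<noteq> {}"
    if "C \<in> {prism A\<^sub>1 z\<^sub>0 z\<^sub>1, prism A\<^sub>2 z\<^sub>1 z\<^sub>2, prism A\<^sub>3 z\<^sub>1 z\<^sub>3}" for C
    using that assms(1-3) by (elim insertE emptyE) (blast intro: convex_prism)+
qed

lemma stack_guarded_by_upper_face:
  assumes "convex A\<^sub>1" "convex A\<^sub>2" "convex A\<^sub>3" "A\<^sub>1 \<subseteq> A\<^sub>2" "A\<^sub>3 \<subseteq> A\<^sub>1"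
    and "z\<^sub>0 \<le> z\<^sub>1" "z\<^sub>1 \<le> z\<^sub>2" "z\<^sub>2 \<le> z\<^sub>3"
    and "g \<in> A\<^sub>3" "g \<in> closure (A\<^sub>2 - A\<^sub>3)"
  shows "guards (at_height (closure (A\<^sub>2 - A\<^sub>3)) z\<^sub>2)
           (prism A\<^sub>1 z\<^sub>0 z\<^sub>1 \<union> prism A\<^sub>2 z\<^sub>1 z\<^sub>2 \<union> prism A\<^sub>3 z\<^sub>2 z\<^sub>3)"
    (is "guards ?G ?P")
proof (rule guards_by_convex_cover)
  show "?P \<subseteq> \<Union>{prism A\<^sub>1 z\<^sub>0 z\<^sub>2, prism A\<^sub>2 z\<^sub>1 z\<^sub>2, prism A\<^sub>3 z\<^sub>2 z\<^sub>3}"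
    using assms(7) unfolding prism_def by auto
  have "(fst g, snd g, z\<^sub>2) \<in> ?G"
    using assms(10) by auto
  moreover have "(fst g, snd g, z\<^sub>2) \<in> prism A\<^sub>1 z\<^sub>0 z\<^sub>2" "(fst g, snd g, z\<^sub>2) \<in> prism A\<^sub>2 z\<^sub>1 z\<^sub>2"
    "(fst g, snd g, z\<^sub>2) \<in> prism A\<^sub>3 z\<^sub>2 z\<^sub>3"
    using assms by auto
  moreover have "prism A\<^sub>1 z\<^sub>0 z\<^sub>2 \<subseteq> ?P"
    using assms(4) unfolding prism_def by auto
  ultimately show "convex C \<and> C \<subseteq> ?P \<and> C \<inter> ?G \<noteq> {}"
    if "C \<in> {prism A\<^sub>1 z\<^sub>0 z\<^sub>2, prism A\<^sub>2 z\<^sub>1 z\<^sub>2, prism A\<^sub>3 z\<^sub>2 z\<^sub>3}" for C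
    using that assms(1-3) by (elim insertE emptyE) (blast intro: convex_prism)+
qed

theorem mainTheorem9:
  fixes r1 r2 r3 :: rect and z0 z1 z2 z3 :: real and i j :: nat
  assumes "valid_rect r1" "valid_rect r2" "valid_rect r3"
    and "z0 < z1" "z1 < z2" "z2 < z3"
    and "canonical_contact r1 r2" "contact_type r1 r2 = i" "i \<in> {1,2,3,4}"
    and "canonical_contact r3 r2" "contact_type r3 r2 = j" "j \<in> {1,2,3,4}"
    and "P = brick r1 z0 z1 \<union> brick r2 z1 z2 \<union> brick r3 z2 z3"
  shows "guards (at_height (closure (rset r2 - rset r1)) z1) P \<or>
         guards (at_height (closure (rset r2 - rset r3)) z2) P"
proof -
  have R1: "rset r1 \<subset> rset r2" and R3: "rset r3 \<subset> rset r2"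
    using assms(7,10) by (auto simp: canonical_contact_def)
  have P: "P = prism (rset r1) z0 z1 \<union> prism (rset r2) z1 z2 \<union> prism (rset r3) z2 z3"
    using assms(13) by (simp add: brick_eq_prism)
  obtain g where g: "g \<in> rset r1" "g \<in> closure (rset r2 - rset r1)"
    using closed_psubset_convex_meets_closure_diff[OF R1 rset_nonempty[OF assms(1)] closed_rset convex_rset] .
  show ?thesis
  proof (cases "rset r3 \<inter> closure (rset r2 - rset r1) = {}")
    case False
    then obtain h where h: "h \<in> rset r3" "h \<in> closure (rset r2 - rset r1)" by blast
    have "guards (at_height (closure (rset r2 - rset r1)) z1) P"
      unfolding P using R1 R3 assms(4-6)
      by (intro stack_guarded_by_lower_face[OF convex_rset convex_rset convex_rset _ _ _ _ _ g h]) auto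
    then show ?thesis ..
  next
    case True
    then have R31: "rset r3 \<subseteq> rset r1"
      using R3 closure_subset by blast
    obtain h where h: "h \<in> rset r3" "h \<in> closure (rset r2 - rset r3)"
      using closed_psubset_convex_meets_closure_diff[OF R3 rset_nonempty[OF assms(3)] closed_rset convex_rset] .
    have "guards (at_height (closure (rset r2 - rset r3)) z2) P"
      unfolding P using R1 R31 assms(4-6)
      by (intro stack_guarded_by_upper_face[OF convex_rset convex_rset convex_rset _ _ _ _ _ h]) auto
    then show ?thesis ..
  qed
qed

end
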